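(* Under the hypotheses and notation of the setting below, the constant \[K=\prod_{j=1}^N\Big(\frac{au_j+b}{eu_j+f}\Big)^j\,\mathrm{Tr}\big[Q\,\mathcal{A}_N^{M-N}\mathcal{C}_N^{(N)}\cdots\mathcal{C}_N^{(1)}\big]\] equals \[K=\prod_{j=1}^N\frac{(1-t)cu_j(au_j+b)^M}{eu_j+f}\prod_{1\le j<k\le N}\frac{tu_j-u_k}{u_j-u_k}.\]
   Context: Fix complex parameters $t,a,b,c,d,e,f$, all nonzero, with $t\neq1$, satisfying $cd+af=0$ and $tcd+be=0$; let $1\le N\le M$ and let $u_1,\dots,u_N$ be pairwise distinct with $au_j+b\neq0$, $eu_j+f\neq0$, $tu_j\neq u_k$ ($j\neq k$). $X\otimes Y$ denotes the Kronecker product $(X_{ik}Y)_{i,k}$. The $2^n\times2^n$ matrices $\mathcal{A}_n,\mathcal{C}_n$ are defined by $\mathcal{A}_1=\mathrm{diag}(au_1+b,eu_1+f)$, $\mathcal{C}_1=\begin{pmatrix}0&(1-t)cu_1\\0&0\end{pmatrix}$, $\mathcal{A}_{n+1}=\mathrm{diag}(au_{n+1}+b,eu_{n+1}+f)\otimes\mathcal{A}_n+\begin{pmatrix}0&0\\(1-t)d&0\end{pmatrix}\otimes\mathcal{C}_n$, $\mathcal{C}_{n+1}=\begin{pmatrix}0&(1-t)cu_{n+1}\\0&0\end{pmatrix}\otimes\mathcal{A}_n+\mathrm{diag}(atu_{n+1}+b,eu_{n+1}+tf)\otimes\mathcal{C}_n$. The matrices $\mathcal{C}_N^{(1)},\dots,\mathcal{C}_N^{(N)}$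 are any matrices with $\sum_j\mathcal{C}_N^{(j)}=\mathcal{C}_N$ such that for all $j$ and $k\neq j$: $\mathcal{C}_N^{(j)}\mathcal{A}_N=\frac{eu_j+f}{au_j+b}\mathcal{A}_N\mathcal{C}_N^{(j)}$, $(\mathcal{C}_N^{(j)})^2=0$, $\mathcal{C}_N^{(j)}\mathcal{C}_N^{(k)}=\frac{(eu_j+f)(au_k+b)(u_j-tu_k)}{(au_j+b)(eu_k+f)(tu_j-u_k)}\mathcal{C}_N^{(k)}\mathcal{C}_N^{(j)}$. Rows/columns of $2^N\times2^N$ matrices are indexed by $\{0,1\}^N$ consistent with the Kronecker structure; $Q$ is the matrix with single entry $1$ at row $(1,\dots,1)$, column $(0,\dots,0)$. *)

theory Defs
  imports Complex_Main "Jordan_Normal_Form.Matrix"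
begin

text \<open>Kronecker product: (X \<otimes> Y) has entries X_(i,k) * Y, the first factor indexing
  the most significant block.\<close>
definition kron :: "complex mat \<Rightarrow> complex mat \<Rightarrow> complex mat" where
  "kron X Y = mat (dim_row X * dim_row Y) (dim_col X * dim_col Y)
     (\<lambda>(i, j). X $$ (i div dim_row Y, j div dim_col Y) * Y $$ (i mod dim_row Y, j mod dim_col Y))"

definition m2 :: "complex \<Rightarrow> complex \<Rightarrow> complex \<Rightarrow> complex \<Rightarrow> complex mat" where
  "m2 p q r s = mat_of_rows_list 2 [[p, q], [r, s]]"

text \<open>The pair (A_n, C_n); parameters t a b c d e f and spectral parameters u_1, u_2, ...
  The case n = 0 is a dummy value and never used (N \<ge> 1).\<close>
fun ACmat :: "complex \<Rightarrow> complex \<Rightarrow> complex \<Rightarrow> complex \<Rightarrow> complex \<Rightarrow> complex \<Rightarrow> complex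
    \<Rightarrow> (nat \<Rightarrow> complex) \<Rightarrow> nat \<Rightarrow> complex mat \<times> complex mat" where
  "ACmat t a b c d e f u 0 = (1\<^sub>m 1, 0\<^sub>m 1 1)"
| "ACmat t a b c d e f u (Suc 0) =
     (m2 (a * u 1 + b) 0 0 (e * u 1 + f), m2 0 ((1 - t) * c * u 1) 0 0)"
| "ACmat t a b c d e f u (Suc (Suc n)) =
     (let A = fst (ACmat t a b c d e f u (Suc n)); C = snd (ACmat t a b c d e f u (Suc n)) in
      (kron (m2 (a * u (Suc (Suc n)) + b) 0 0 (e * u (Suc (Suc n)) + f)) A
         + kron (m2 0 0 ((1 - t) * d) 0) C,
       kron (m2 0 ((1 - t) * c * u (Suc (Suc n))) 0 0) A
         + kron (m2 (a * t * u (Suc (Suc n)) + b) 0 0 (e * u (Suc (Suc n)) + t * f)) C))"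

definition Amat where "Amat t a b c d e f u n = fst (ACmat t a b c d e f u n)"
definition Cmat where "Cmat t a b c d e f u n = snd (ACmat t a b c d e f u n)"

fun msum :: "nat \<Rightarrow> (nat \<Rightarrow> complex mat) \<Rightarrow> nat \<Rightarrow> complex mat" where
  "msum dm Cs 0 = 0\<^sub>m dm dm"
| "msum dm Cs (Suc n) = msum dm Cs n + Cs (Suc n)"

fun mprodrev :: "nat \<Rightarrow> (nat \<Rightarrow> complex mat) \<Rightarrow> nat \<Rightarrow> complex mat" where
  "mprodrev dm Cs 0 = 1\<^sub>m dm"
| "mprodrev dm Cs (Suc n) = Cs (Suc n) * mprodrev dm Cs n"

definition mtrace :: "complex mat \<Rightarrow> complex" where
  "mtrace X = (\<Sum>i<dim_row X. X $$ (i, i))"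

text \<open>Q: single entry 1 at row (1,...,1) = 2^N - 1 and column (0,...,0) = 0.\<close>
definition Qmat :: "nat \<Rightarrow> complex mat" where
  "Qmat N = mat (2 ^ N) (2 ^ N) (\<lambda>(i, j). if i = 2 ^ N - 1 \<and> j = 0 then 1 else 0)"

end

theory Submission imports Defs begin

text \<open>
  The matrix A_N is block lower triangular, and the basis vector e_m with the m highest of the N
  sites occupied is an eigenvector of it. C_N e_m splits into A_N-eigenvectors, one for each
  occupied site j, with eigenvalues proportional to (a u_j + b)/(e u_j + f); by the two relations
  among the parameters these ratios are pairwise distinct. Since C^(j) multiplies A_N-eigenvalues by
  exactly that ratio, the splitting C_N = C^(1) + ... + C^(N) applied to e_m is the eigen-splitting,
  so C^(N-m+1) e_m is an explicit multiple of e_(m-1). Hence C^(N) ... C^(1) maps the fully occupied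
  vector to a multiple of the empty one; Q picks out this entry, A_N^(M-N) contributes its eigenvalue
  (a u_1 + b)^(M-N) ... (a u_N + b)^(M-N), and the multiples telescope to the stated product.\<close>

section \<open>Matrices acting on coordinate functions\<close>

text \<open>Vectors are modelled as functions \<open>nat \<Rightarrow> complex\<close>, so that a block of a vector is just the
  shifted function \<open>\<lambda>l. v (D + l)\<close>.\<close>
definition mat_act :: "complex mat \<Rightarrow> (nat \<Rightarrow> complex) \<Rightarrow> nat \<Rightarrow> complex" where
  "mat_act X v i = (\<Sum>l<dim_col X. X $$ (i, l) * v l)"

definition unit_fun :: "nat \<Rightarrow> nat \<Rightarrow> complex" where
  "unit_fun k i = (if i = k then 1 else 0)"

lemma mat_act_cong: "(\<And>l. l < dim_col X \<Longrightarrow> v l = w l) \<Longrightarrow> mat_act X v i = mat_act X w i"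
  unfolding mat_act_def by (rule sum.cong) auto

lemma mat_act_vanishing: "(\<And>l. l < dim_col X \<Longrightarrow> v l = 0) \<Longrightarrow> mat_act X v i = 0"
  unfolding mat_act_def by simp

lemma mat_act_zero: "mat_act X (\<lambda>l. 0) i = 0"
  by (rule mat_act_vanishing) simp

lemma mat_act_scale: "mat_act X (\<lambda>l. k * v l) i = k * mat_act X v i"
  unfolding mat_act_def by (simp add: sum_distrib_left algebra_simps)

lemma mat_act_diff: "mat_act X (\<lambda>l. v l - w l) i = mat_act X v i - mat_act X w i"
  unfolding mat_act_def by (simp add: sum_subtractf algebra_simps)

lemma mat_act_sum: "mat_act X (\<lambda>l. \<Sum>j\<in>J. g j l) i = (\<Sum>j\<in>J. mat_act X (g j) i)"
  unfolding mat_act_def by (simp add: sum_distrib_left sum.swap[of _ J])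

lemma mat_act_add_mat:
  "dim_col X = dim_col Y \<Longrightarrow> i < dim_row Y \<Longrightarrow> mat_act (X + Y) v i = mat_act X v i + mat_act Y v i"
  unfolding mat_act_def by (simp add: sum.distrib algebra_simps)

lemma mat_act_smult_mat: "i < dim_row X \<Longrightarrow> mat_act (k \<cdot>\<^sub>m X) v i = k * mat_act X v i"
  unfolding mat_act_def by (simp add: sum_distrib_left algebra_simps)

lemma mat_act_mult:
  assumes i: "i < dim_row X" and d: "dim_col X = dim_row Y"
  shows "mat_act (X * Y) v i = mat_act X (mat_act Y v) i"
proof -
  have "mat_act (X * Y) v i = (\<Sum>l<dim_col Y. (\<Sum>k<dim_row Y. X $$ (i,k) * Y $$ (k,l)) * v l)"
    unfolding mat_act_def using i d
    by (intro sum.cong) (auto simp: scalar_prod_def atLeast0LessThan)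
  also have "\<dots> = (\<Sum>k<dim_row Y. X $$ (i,k) * (\<Sum>l<dim_col Y. Y $$ (k,l) * v l))"
    by (simp add: sum_distrib_left sum_distrib_right sum.swap[of _ "{..<dim_row Y}"] algebra_simps)
  finally show ?thesis unfolding mat_act_def using d by simp
qed

lemma mat_act_one: "i < D \<Longrightarrow> mat_act (1\<^sub>m D) v i = v i"
  unfolding mat_act_def by (simp add: if_distrib[of "\<lambda>x. x * _"] cong: if_cong)

lemma mat_act_unit_fun: "k < dim_col X \<Longrightarrow> mat_act X (unit_fun k) i = X $$ (i, k)"
  unfolding mat_act_def unit_fun_def by (simp add: if_distrib[of "\<lambda>x. _ * x"] cong: if_cong)

lemma unit_fun_high: "i < D \<Longrightarrow> unit_fun (D + k) i = 0"
  by (simp add: unit_fun_def)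

lemma unit_fun_shift: "(\<lambda>l. unit_fun (D + k) (D + l)) = unit_fun k"
  by (auto simp: unit_fun_def)

lemma unit_fun_shift': "\<not> i < D \<Longrightarrow> unit_fun (D + k) i = unit_fun k (i - D)"
  by (auto simp: unit_fun_def)

lemma eigenfun_sum_zero:
  assumes "finite J" and "inj_on \<mu> J" and "dim_col X = D"
    and "\<forall>j\<in>J. \<forall>i<D. mat_act X (z j) i = \<mu> j * z j i"
    and "\<forall>i<D. (\<Sum>j\<in>J. z j i) = 0"
  shows "\<forall>j\<in>J. \<forall>i<D. z j i = 0"
  using assms
proof (induction J arbitrary: z rule: finite_induct)
  case empty
  then show ?case by simp
next
  case (insert a J)
  \<comment> \<open>Apply the induction hypothesis to \<open>(X - \<mu> a) z\<^sub>j\<close>, \<open>j \<in> J\<close>, which kills the component \<open>z\<^sub>a\<close>.\<close>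
  define z' where "z' j i = (\<mu> j - \<mu> a) * z j i" for j i
  have eig': "\<forall>j\<in>J. \<forall>i<D. mat_act X (z' j) i = \<mu> j * z' j i"
    using insert.prems(3) unfolding z'_def by (simp add: mat_act_scale)
  have za: "(\<Sum>j\<in>J. z j i) = - z a i" if "i < D" for i
    using insert.prems(4) that insert.hyps by (simp add: add_eq_0_iff)
  have "(\<Sum>j\<in>insert a J. \<mu> j * z j i) = 0" if i: "i < D" for i
  proof -
    have "(\<Sum>j\<in>insert a J. \<mu> j * z j i) = (\<Sum>j\<in>insert a J. mat_act X (z j) i)"
      using insert.prems(3) i by (intro sum.cong) auto
    also have "\<dots> = mat_act X (\<lambda>l. \<Sum>j\<in>insert a J. z j l) i" by (simp add: mat_act_sum)
    also have "\<dots> = 0"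
      using insert.prems(2,4) by (intro mat_act_vanishing) auto
    finally show ?thesis .
  qed
  moreover have "(\<Sum>j\<in>J. z' j i) = (\<Sum>j\<in>J. \<mu> j * z j i) - \<mu> a * (\<Sum>j\<in>J. z j i)" for i
    unfolding z'_def by (simp add: algebra_simps sum_subtractf sum_distrib_left)
  ultimately have "(\<Sum>j\<in>J. z' j i) = 0" if "i < D" for i
    using za[OF that] that insert.hyps by (simp add: add_eq_0_iff)
  then have "\<forall>j\<in>J. \<forall>i<D. z' j i = 0"
    using insert.IH[of z'] insert.prems(1,2) eig' by auto
  moreover have "\<mu> j \<noteq> \<mu> a" if "j \<in> J" for j
    using insert.prems(1) insert.hyps that by (auto simp: inj_on_def)
  ultimately have "\<forall>j\<in>J. \<forall>i<D. z j i = 0"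
    unfolding z'_def by auto
  with za show ?case by auto
qed

lemma msum_act:
  assumes "\<forall>j\<in>{1..N}. Cs j \<in> carrier_mat D D" and "k \<le> N"
  shows "msum D Cs k \<in> carrier_mat D D \<and> (\<forall>i<D. mat_act (msum D Cs k) v i = (\<Sum>j=1..k. mat_act (Cs j) v i))"
  using assms(2)
proof (induction k)
  case 0
  then show ?case by (simp add: mat_act_def)
next
  case (Suc k)
  then have "Cs (Suc k) \<in> carrier_mat D D" "msum D Cs k \<in> carrier_mat D D"
    using assms(1) by auto
  with Suc show ?case by (auto simp: mat_act_add_mat)
qed

lemma mprodrev_carrier:
  assumes "\<forall>j\<in>{1..N}. Cs j \<in> carrier_mat D D" and "k \<le> N"
  shows "mprodrev D Cs k \<in> carrier_mat D D"
  using assms(2)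
proof (induction k)
  case (Suc k)
  then have "Cs (Suc k) \<in> carrier_mat D D" using assms(1) by simp
  with Suc show ?case by simp
qed simp

lemma mtrace_Qmat:
  assumes B: "B \<in> carrier_mat (2^N) (2^N)" and X: "X \<in> carrier_mat (2^N) (2^N)"
  shows "mtrace (Qmat N * B * X) = (\<Sum>r<2^N. B $$ (0, r) * X $$ (r, 2^N - 1))"
proof -
  have QB: "(Qmat N * B) $$ (i, l) = (if i = 2^N - 1 then B $$ (0, l) else 0)"
    if "i < 2^N" "l < 2^N" for i l
    using that B by (simp add: scalar_prod_def Qmat_def if_distrib[of "\<lambda>x. x * _"] cong: if_cong)
  have "(Qmat N * B * X) $$ (i, i) = (if i = 2^N - 1 then (\<Sum>r<2^N. B $$ (0, r) * X $$ (r, 2^N - 1)) else 0)"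
    if "i < 2^N" for i
  proof -
    have "(Qmat N * B * X) $$ (i, i) = (\<Sum>r<2^N. (Qmat N * B) $$ (i, r) * X $$ (r, i))"
      using that B X by (simp add: scalar_prod_def Qmat_def lessThan_atLeast0)
    also have "\<dots> = (\<Sum>r<2^N. if i = 2^N - 1 then B $$ (0, r) * X $$ (r, 2^N - 1) else 0)"
      using that QB by (intro sum.cong) auto
    finally show ?thesis by simp
  qed
  then show ?thesis
    unfolding mtrace_def using B by (simp add: Qmat_def cong: if_cong)
qed

lemma m2_dims [simp]: "dim_row (m2 p q r s) = 2" "dim_col (m2 p q r s) = 2"
  by (auto simp: m2_def mat_of_rows_list_def)

lemma m2_carrier: "m2 p q r s \<in> carrier_mat 2 2"
  by (intro carrier_matI) simp_all

lemma m2_index [simp]: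
  "m2 p q r s $$ (0, 0) = p" "m2 p q r s $$ (0, Suc 0) = q"
  "m2 p q r s $$ (Suc 0, 0) = r" "m2 p q r s $$ (Suc 0, Suc 0) = s"
  by (auto simp: m2_def mat_of_rows_list_def)

lemma kron_dims [simp]:
  "dim_row (kron X Y) = dim_row X * dim_row Y" "dim_col (kron X Y) = dim_col X * dim_col Y"
  by (auto simp: kron_def)

lemma kron_index:
  "i < dim_row X * dim_row Y \<Longrightarrow> j < dim_col X * dim_col Y \<Longrightarrow>
   kron X Y $$ (i, j) = X $$ (i div dim_row Y, j div dim_col Y) * Y $$ (i mod dim_row Y, j mod dim_col Y)"
  by (simp add: kron_def)

lemma sum_lessThan_add: "(\<Sum>l<(D::nat) + n. g l) = (\<Sum>l<D. g l) + (\<Sum>l<n. g (D + l))"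
  by (induction n) (auto simp: add.assoc)

lemma kron_one_right [simp]: "kron X (1\<^sub>m 1) = X"
  by (intro eq_matI) (auto simp: kron_index)

lemma kron_zero_right [simp]: "kron X (0\<^sub>m 1 1) = 0\<^sub>m (dim_row X) (dim_col X)"
  by (intro eq_matI) (auto simp: kron_index)

lemma block_div_mod:
  "i < 2 * (D::nat) \<Longrightarrow> (i < D \<longrightarrow> i div D = 0 \<and> i mod D = i) \<and> (\<not> i < D \<longrightarrow> i div D = 1 \<and> i mod D = i - D)"
  by (auto simp: div_if mod_if)

lemma mat_act_kron:
  assumes X: "X \<in> carrier_mat 2 2" and Y: "Y \<in> carrier_mat D D" and i: "i < 2 * D"
  shows "mat_act (kron X Y) v i = X $$ (i div D, 0) * mat_act Y v (i mod D)
           + X $$ (i div D, 1) * mat_act Y (\<lambda>l. v (D + l)) (i mod D)"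
proof -
  have "D > 0" using i by auto
  have "mat_act (kron X Y) v i = (\<Sum>l<D + D. X $$ (i div D, l div D) * Y $$ (i mod D, l mod D) * v l)"
    unfolding mat_act_def using X Y i by (intro sum.cong) (auto simp: kron_index mult_2)
  also have "\<dots> = (\<Sum>l<D. X $$ (i div D, 0) * Y $$ (i mod D, l) * v l)
       + (\<Sum>l<D. X $$ (i div D, 1) * Y $$ (i mod D, l) * v (D + l))"
    unfolding sum_lessThan_add using \<open>D > 0\<close> by (intro arg_cong2[where f="(+)"] sum.cong) auto
  finally show ?thesis unfolding mat_act_def using Y by (simp add: sum_distrib_left algebra_simps)
qed

section \<open>The transfer matrices\<close>

locale transfer_matrices =
  fixes t a b c d e f :: complex and u :: "nat \<Rightarrow> complex"
begin

abbreviation A :: "nat \<Rightarrow> complex mat" where "A n \<equiv> Amat t a b c d e f u n"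
abbreviation C :: "nat \<Rightarrow> complex mat" where "C n \<equiv> Cmat t a b c d e f u n"
abbreviation \<alpha> :: "nat \<Rightarrow> complex" where "\<alpha> j \<equiv> a * u j + b"
abbreviation \<beta> :: "nat \<Rightarrow> complex" where "\<beta> j \<equiv> e * u j + f"
abbreviation \<gamma> :: "nat \<Rightarrow> complex" where "\<gamma> j \<equiv> (1 - t) * c * u j"
abbreviation \<delta> :: complex where "\<delta> \<equiv> (1 - t) * d"

lemma AC_Suc:
  "A (Suc n) = kron (m2 (\<alpha> (Suc n)) 0 0 (\<beta> (Suc n))) (A n) + kron (m2 0 0 \<delta> 0) (C n) \<and>
   C (Suc n) = kron (m2 0 (\<gamma> (Suc n)) 0 0) (A n)
      + kron (m2 (a * t * u (Suc n) + b) 0 0 (e * u (Suc n) + t * f)) (C n)"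
proof (cases n)
  case 0
  show ?thesis unfolding 0 Amat_def Cmat_def
    by (simp only: ACmat.simps fst_conv snd_conv kron_one_right kron_zero_right m2_dims
        right_add_zero_mat[OF m2_carrier]) simp
next
  case (Suc m)
  show ?thesis unfolding Suc Amat_def Cmat_def by (simp add: Let_def)
qed

lemmas A_Suc = AC_Suc[THEN conjunct1] and C_Suc = AC_Suc[THEN conjunct2]

lemma AC_carrier: "A n \<in> carrier_mat (2^n) (2^n) \<and> C n \<in> carrier_mat (2^n) (2^n)"
proof (induction n)
  case 0
  show ?case by (simp add: Amat_def Cmat_def)
next
  case (Suc n)
  then show ?case unfolding A_Suc C_Suc by (intro conjI carrier_matI) auto
qed

lemma A_carrier: "A n \<in> carrier_mat (2^n) (2^n)" and C_carrier: "C n \<in> carrier_mat (2^n) (2^n)"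
  using AC_carrier by auto

lemma A_dims [simp]: "dim_row (A n) = 2^n" "dim_col (A n) = 2^n"
  and C_dims [simp]: "dim_row (C n) = 2^n" "dim_col (C n) = 2^n"
  using A_carrier C_carrier by auto

lemma mat_act_A_Suc:
  assumes i: "i < 2 * 2^n"
  shows "mat_act (A (Suc n)) v i = (if i < 2^n then \<alpha> (Suc n) * mat_act (A n) v i
     else \<delta> * mat_act (C n) v (i - 2^n) + \<beta> (Suc n) * mat_act (A n) (\<lambda>l. v (2^n + l)) (i - 2^n))"
proof -
  have "mat_act (A (Suc n)) v i = mat_act (kron (m2 (\<alpha> (Suc n)) 0 0 (\<beta> (Suc n))) (A n)) v i
      + mat_act (kron (m2 0 0 \<delta> 0) (C n)) v i"
    unfolding A_Suc using i by (intro mat_act_add_mat) auto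
  then show ?thesis
    using i block_div_mod[OF i] by (simp add: mat_act_kron[OF m2_carrier A_carrier i]
        mat_act_kron[OF m2_carrier C_carrier i])
qed

lemma mat_act_C_Suc:
  assumes i: "i < 2 * 2^n"
  shows "mat_act (C (Suc n)) v i = (if i < 2^n then (a * t * u (Suc n) + b) * mat_act (C n) v i
        + \<gamma> (Suc n) * mat_act (A n) (\<lambda>l. v (2^n + l)) i
     else (e * u (Suc n) + t * f) * mat_act (C n) (\<lambda>l. v (2^n + l)) (i - 2^n))"
proof -
  have "mat_act (C (Suc n)) v i = mat_act (kron (m2 0 (\<gamma> (Suc n)) 0 0) (A n)) v i
      + mat_act (kron (m2 (a * t * u (Suc n) + b) 0 0 (e * u (Suc n) + t * f)) (C n)) v i"
    unfolding C_Suc using i by (intro mat_act_add_mat) auto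
  then show ?thesis
    using i block_div_mod[OF i] by (simp add: mat_act_kron[OF m2_carrier A_carrier i]
        mat_act_kron[OF m2_carrier C_carrier i])
qed

text \<open>Index \<open>2^n - 2^(n-m)\<close> has binary digits \<open>1\<dots>10\<dots>0\<close> with \<open>m\<close> ones: the basis vector
  with the \<open>m\<close> highest sites \<open>n-m+1, \<dots>, n\<close> occupied.\<close>
definition occ_index :: "nat \<Rightarrow> nat \<Rightarrow> nat" where
  "occ_index n m = 2^n - 2^(n-m)"

fun A_eigval :: "nat \<Rightarrow> nat \<Rightarrow> complex" where
  "A_eigval 0 m = 1"
| "A_eigval (Suc n) m = (if m = 0 then \<alpha> (Suc n) * A_eigval n 0 else \<beta> (Suc n) * A_eigval n (m - 1))"

lemma occ_index_0 [simp]: "occ_index n 0 = 0"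
  by (simp add: occ_index_def)

lemma occ_index_Suc: "m \<le> n \<Longrightarrow> occ_index (Suc n) (Suc m) = 2^n + occ_index n m"
  using power_increasing[of "n - m" n "2::nat"] by (simp add: occ_index_def)

lemma A_eigval_0: "A_eigval n 0 = (\<Prod>j=1..n. \<alpha> j)"
  by (induction n) auto

lemma C_unit_0: "i < 2^n \<Longrightarrow> mat_act (C n) (unit_fun 0) i = 0"
proof (induction n arbitrary: i)
  case 0
  then show ?case by (simp add: Cmat_def mat_act_def)
next
  case (Suc n)
  have "(\<lambda>l. unit_fun 0 (2^n + l)) = (\<lambda>l. 0)" by (auto simp: unit_fun_def)
  with Suc show ?case by (simp add: mat_act_C_Suc mat_act_zero)
qed

lemma A_unit_occ:
  "m \<le> n \<Longrightarrow> i < 2^n \<Longrightarrow>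
   mat_act (A n) (unit_fun (occ_index n m)) i = A_eigval n m * unit_fun (occ_index n m) i"
proof (induction n arbitrary: m i)
  case 0
  then show ?case by (simp add: Amat_def mat_act_def occ_index_def unit_fun_def)
next
  case (Suc n)
  show ?case
  proof (cases m)
    case 0
    have zero: "(\<lambda>l. unit_fun 0 (2^n + l)) = (\<lambda>l. 0)" by (auto simp: unit_fun_def)
    show ?thesis
    proof (cases "i < 2^n")
      case True
      then show ?thesis using Suc.prems Suc.IH[of 0 i] unfolding 0 by (simp add: mat_act_A_Suc)
    next
      case False
      then have "i - 2^n < 2^n" "unit_fun 0 i = 0" using Suc.prems by (auto simp: unit_fun_def)
      then show ?thesis using False Suc.prems C_unit_0[of "i - 2^n" n] unfolding 0
        by (simp add: mat_act_A_Suc zero mat_act_zero)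
    qed
  next
    case (Suc m')
    then have m': "m' \<le> n" using Suc.prems by simp
    have low: "mat_act X (unit_fun (2^n + occ_index n m')) k = 0" if "dim_col X = 2^n" for X k
      using that by (intro mat_act_vanishing) (simp add: unit_fun_high)
    show ?thesis
      using Suc.prems Suc.IH[OF m'] low[of "A n"] low[of "C n"]
      unfolding Suc occ_index_Suc[OF m']
      by (cases "i < 2^n") (simp_all add: mat_act_A_Suc unit_fun_high unit_fun_shift unit_fun_shift')
  qed
qed

lemma A_row_0: "l < 2^n \<Longrightarrow> A n $$ (0, l) = (if l = 0 then A_eigval n 0 else 0)"
proof (induction n arbitrary: l)
  case 0
  then show ?case by (simp add: Amat_def)
next
  case (Suc n)
  then have l: "l < 2 * 2^n" by simp
  show ?case
  proof (cases "l < 2^n")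
    case True
    with Suc.IH[OF True] l show ?thesis unfolding A_Suc by (simp add: kron_index)
  next
    case False
    with block_div_mod[OF l] have "l div 2^n = 1" by auto
    moreover from False have "l \<noteq> 0" by (intro notI) simp
    ultimately show ?thesis using l unfolding A_Suc by (simp add: kron_index)
  qed
qed

lemma A_pow_row_0: "l < 2^n \<Longrightarrow> (A n ^\<^sub>m k) $$ (0, l) = (if l = 0 then A_eigval n 0 ^ k else 0)"
proof (induction k arbitrary: l)
  case (Suc k)
  have "(A n ^\<^sub>m Suc k) $$ (0, l) = (\<Sum>r<2^n. (A n ^\<^sub>m k) $$ (0, r) * A n $$ (r, l))"
    using Suc.prems by (simp add: scalar_prod_def A_carrier lessThan_atLeast0)
  also have "\<dots> = (\<Sum>r<(2::nat)^n. if r = 0 then A_eigval n 0 ^ k * A n $$ (0, l) else 0)"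
    using Suc.IH by (intro sum.cong) auto
  finally show ?case using A_row_0[OF Suc.prems] by simp
qed simp

lemma mtrace_Qmat_A_pow:
  assumes "X \<in> carrier_mat (2^n) (2^n)"
  shows "mtrace (Qmat n * A n ^\<^sub>m k * X) = A_eigval n 0 ^ k * X $$ (0, 2^n - 1)"
proof -
  have "mtrace (Qmat n * A n ^\<^sub>m k * X) = (\<Sum>r<2^n. (A n ^\<^sub>m k) $$ (0, r) * X $$ (r, 2^n - 1))"
    by (rule mtrace_Qmat[OF pow_carrier_mat[OF A_carrier] assms])
  also have "\<dots> = (\<Sum>r<(2::nat)^n. if r = 0 then A_eigval n 0 ^ k * X $$ (0, 2^n - 1) else 0)"
    by (intro sum.cong) (auto simp: A_pow_row_0)
  finally show ?thesis by simp
qed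

definition mix_coeff :: "nat \<Rightarrow> nat \<Rightarrow> complex" where
  "mix_coeff k j = \<delta> * \<gamma> k * \<beta> j / (\<alpha> k * \<beta> j - \<beta> k * \<alpha> j)"

text \<open>This identity is what determines \<open>mix_coeff\<close>: it makes the component of \<open>C k\<close> along a new
  site \<open>k\<close> an eigenvector of \<open>A k\<close>.\<close>
lemma mix_coeff_balance:
  assumes "\<beta> j \<noteq> 0" and "\<alpha> k * \<beta> j - \<beta> k * \<alpha> j \<noteq> 0"
  shows "\<delta> * \<gamma> k * x + \<beta> k * (mix_coeff k j * (\<alpha> j / \<beta> j * x)) = \<alpha> k * (mix_coeff k j * x)"
proof -
  have gen: "K * x + bk * (K * bj / (ak * bj - bk * aj) * (aj / bj * x)) = ak * (K * bj / (ak * bj - bk * aj) * x)"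
    if "bj \<noteq> 0" "ak * bj - bk * aj \<noteq> 0" for K x ak bk aj bj :: complex
  proof -
    have "bk * (K * bj / (ak * bj - bk * aj) * (aj / bj * x)) = K * x * (bk * aj) / (ak * bj - bk * aj)"
      using that by (simp add: field_simps)
    moreover have "K * x = K * x * (ak * bj - bk * aj) / (ak * bj - bk * aj)"
      using that by simp
    ultimately show ?thesis
      by (simp add: add_divide_distrib[symmetric] algebra_simps)
  qed
  show ?thesis unfolding mix_coeff_def by (rule gen[OF assms])
qed

fun C_coeff :: "nat \<Rightarrow> nat \<Rightarrow> complex" where
  "C_coeff 0 m = 0"
| "C_coeff (Suc n) m = (if m = 1 then \<gamma> (Suc n) * A_eigval n 0
     else (e * u (Suc n) + t * f - mix_coeff (Suc n) (Suc (Suc n) - m)) * C_coeff n (m - 1))"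

text \<open>For \<open>m \<ge> 1\<close> the vector \<open>C n e\<^bsub>occ_index n m\<^esub>\<close> splits into the components
  \<open>C_component n m j\<close>, \<open>j = n-m+1, \<dots>, n\<close>, each an eigenvector of \<open>A n\<close>.\<close>
fun C_component :: "nat \<Rightarrow> nat \<Rightarrow> nat \<Rightarrow> nat \<Rightarrow> complex" where
  "C_component 0 m j i = 0"
| "C_component (Suc n) m j i =
     (if j = Suc n then
        (if i < 2^n then \<gamma> (Suc n) * A_eigval n (m - 1) * unit_fun (occ_index n (m - 1)) i
         else (\<Sum>k\<in>{Suc n - m + 1..n}. mix_coeff (Suc n) k * C_component n (m - 1) k (i - 2^n)))
      else if i < 2^n then 0
      else (e * u (Suc n) + t * f - mix_coeff (Suc n) j) * C_component n (m - 1) j (i - 2^n))"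

lemma C_component_sum:
  "m \<le> n \<Longrightarrow> i < 2^n \<Longrightarrow>
   (\<Sum>j=n-m+1..n. C_component n m j i) = mat_act (C n) (unit_fun (occ_index n m)) i"
proof (induction n arbitrary: m i)
  case 0
  then show ?case by (simp add: C_unit_0)
next
  case (Suc n)
  show ?case
  proof (cases m)
    case 0
    then show ?thesis using Suc.prems by (simp add: C_unit_0)
  next
    case (Suc m')
    then have m': "m' \<le> n" using Suc.prems by simp
    define T where "T = {n - m' + 1..n}"
    have split: "(\<Sum>j=Suc n-m+1..Suc n. C_component (Suc n) m j i)
        = C_component (Suc n) m (Suc n) i + (\<Sum>j\<in>T. C_component (Suc n) m j i)"
    proof -
      have "{Suc n - m + 1..Suc n} = insert (Suc n) T" using m' unfolding Suc T_def by auto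
      then show ?thesis by (simp add: T_def)
    qed
    have occ: "occ_index (Suc n) m = 2^n + occ_index n m'"
      using occ_index_Suc[OF m'] Suc by simp
    show ?thesis
    proof (cases "i < 2^n")
      case True
      have "(\<Sum>j\<in>T. C_component (Suc n) m j i) = 0"
        using True by (intro sum.neutral) (auto simp: T_def)
      moreover have "mat_act (C n) (unit_fun (2^n + occ_index n m')) i = 0"
        by (intro mat_act_vanishing) (simp add: unit_fun_high)
      ultimately show ?thesis
        using True Suc.prems A_unit_occ[OF m' True]
        unfolding split occ by (simp add: mat_act_C_Suc Suc unit_fun_shift)
    next
      case False
      let ?Y = "\<lambda>j. C_component n m' j (i - 2^n)"
      have "(\<Sum>j\<in>T. C_component (Suc n) m j i)
          = (\<Sum>j\<in>T. (e * u (Suc n) + t * f - mix_coeff (Suc n) j) * ?Y j)"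
        using False by (intro sum.cong) (auto simp: T_def Suc)
      moreover have "C_component (Suc n) m (Suc n) i = (\<Sum>j\<in>T. mix_coeff (Suc n) j * ?Y j)"
        using False by (simp add: T_def Suc)
      ultimately have "(\<Sum>j=Suc n-m+1..Suc n. C_component (Suc n) m j i)
          = (\<Sum>j\<in>T. mix_coeff (Suc n) j * ?Y j)
            + (\<Sum>j\<in>T. (e * u (Suc n) + t * f - mix_coeff (Suc n) j) * ?Y j)"
        unfolding split by simp
      also have "\<dots> = (e * u (Suc n) + t * f) * (\<Sum>j\<in>T. ?Y j)"
        by (simp add: sum.distrib[symmetric] sum_distrib_left algebra_simps)
      also have "\<dots> = (e * u (Suc n) + t * f) * mat_act (C n) (unit_fun (occ_index n m')) (i - 2^n)"
        using Suc.IH[OF m'] Suc.prems False by (simp add: T_def)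
      also have "\<dots> = mat_act (C (Suc n)) (unit_fun (occ_index (Suc n) m)) i"
        using False Suc.prems unfolding occ by (simp add: mat_act_C_Suc unit_fun_shift)
      finally show ?thesis .
    qed
  qed
qed

lemma C_component_leading:
  "1 \<le> m \<Longrightarrow> m \<le> n \<Longrightarrow> i < 2^n \<Longrightarrow>
   C_component n m (n - m + 1) i = C_coeff n m * unit_fun (occ_index n (m - 1)) i"
proof (induction n arbitrary: m i)
  case (Suc n)
  then obtain m' where m: "m = Suc m'" and m': "m' \<le> n"
    by (metis Suc_le_D Suc_le_mono One_nat_def)
  show ?case
  proof (cases m')
    case 0
    then show ?thesis using Suc.prems by (auto simp: m unit_fun_def)
  next
    case (Suc m'')
    then have "occ_index (Suc n) m' = 2^n + occ_index n (m' - 1)" "Suc n - m + 1 = n - m' + 1"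
      "Suc (Suc n) - m = n - m' + 1"
      using occ_index_Suc[of m'' n] m m' by auto
    then show ?thesis using Suc.IH[of m' "i - 2^n"] Suc.prems m m' \<open>m' = Suc m''\<close>
      by (cases "i < 2^n") (auto simp: unit_fun_high unit_fun_shift')
  qed
qed simp

lemma C_component_eigen_old:
  assumes j: "j \<noteq> Suc n" and i: "i < 2^Suc n"
    and IH: "\<And>i. i < 2^n \<Longrightarrow> mat_act (A n) (C_component n m j) i = A_eigval n m * \<alpha> j / \<beta> j * C_component n m j i"
  shows "mat_act (A (Suc n)) (C_component (Suc n) (Suc m) j) i
    = A_eigval (Suc n) (Suc m) * \<alpha> j / \<beta> j * C_component (Suc n) (Suc m) j i"
proof -
  have low: "mat_act X (C_component (Suc n) (Suc m) j) k = 0" if "dim_col X = 2^n" for X k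
    using that j by (intro mat_act_vanishing) simp
  show ?thesis
  proof (cases "i < 2^n")
    case True
    with i j low[of "A n"] show ?thesis by (simp add: mat_act_A_Suc)
  next
    case False
    have "(\<lambda>l. C_component (Suc n) (Suc m) j (2^n + l))
        = (\<lambda>l. (e * u (Suc n) + t * f - mix_coeff (Suc n) j) * C_component n m j l)"
      using j by auto
    with False i j low[of "C n"] IH[of "i - 2^n"] show ?thesis
      by (simp add: mat_act_A_Suc mat_act_scale)
  qed
qed

end

section \<open>Separated spectral parameters\<close>

locale spectral_setting = transfer_matrices +
  fixes N :: nat
  assumes \<alpha>_nonzero: "j \<in> {1..N} \<Longrightarrow> a * u j + b \<noteq> 0"
    and \<beta>_nonzero: "j \<in> {1..N} \<Longrightarrow> e * u j + f \<noteq> 0"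
    and ratios_distinct: "j \<in> {1..N} \<Longrightarrow> k \<in> {1..N} \<Longrightarrow> j \<noteq> k \<Longrightarrow>
      (a * u k + b) * (e * u j + f) - (e * u k + f) * (a * u j + b) \<noteq> 0"
begin

lemma A_eigval_nonzero: "n \<le> N \<Longrightarrow> A_eigval n m \<noteq> 0"
  by (induction n arbitrary: m) (auto simp: \<alpha>_nonzero \<beta>_nonzero)

lemma C_component_eigen_new:
  assumes n: "Suc n \<le> N" and m: "m \<le> n" and i: "i < 2^Suc n"
    and IH: "\<And>j i. j \<in> {n-m+1..n} \<Longrightarrow> i < 2^n \<Longrightarrow>
      mat_act (A n) (C_component n m j) i = A_eigval n m * \<alpha> j / \<beta> j * C_component n m j i"
  shows "mat_act (A (Suc n)) (C_component (Suc n) (Suc m) (Suc n)) i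
    = A_eigval (Suc n) (Suc m) * \<alpha> (Suc n) / \<beta> (Suc n) * C_component (Suc n) (Suc m) (Suc n) i"
proof -
  define T where "T = {n - m + 1..n}"
  let ?Y = "C_component (Suc n) (Suc m) (Suc n)" and ?lam = "A_eigval n m"
  have \<beta>N: "\<beta> (Suc n) \<noteq> 0" using n \<beta>_nonzero by simp
  have low: "mat_act X ?Y k = \<gamma> (Suc n) * ?lam * mat_act X (unit_fun (occ_index n m)) k"
    if "dim_col X = 2^n" for X k
    using that by (simp add: mat_act_scale[symmetric] cong: mat_act_cong)
  show ?thesis
  proof (cases "i < 2^n")
    case True
    with i \<beta>N A_unit_occ[OF m True] show ?thesis by (simp add: mat_act_A_Suc low)
  next
    case False
    let ?i = "i - 2^n" and ?Z = "\<lambda>k. C_component n m k (i - 2^n)"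
    have i': "?i < 2^n" using i by simp
    have high: "(\<lambda>l. ?Y (2^n + l)) = (\<lambda>l. \<Sum>k\<in>T. mix_coeff (Suc n) k * C_component n m k l)"
      by (auto simp: T_def)
    have "mat_act (A (Suc n)) ?Y i
        = \<delta> * (\<gamma> (Suc n) * ?lam * mat_act (C n) (unit_fun (occ_index n m)) ?i)
          + \<beta> (Suc n) * mat_act (A n) (\<lambda>l. \<Sum>k\<in>T. mix_coeff (Suc n) k * C_component n m k l) ?i"
      using False i by (simp add: mat_act_A_Suc low high T_def)
    also have "\<dots> = (\<Sum>k\<in>T. \<delta> * \<gamma> (Suc n) * (?lam * ?Z k)
          + \<beta> (Suc n) * (mix_coeff (Suc n) k * (\<alpha> k / \<beta> k * (?lam * ?Z k))))"
    proof -
      have "mat_act (C n) (unit_fun (occ_index n m)) ?i = (\<Sum>k\<in>T. ?Z k)"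
        using C_component_sum[OF m i'] unfolding T_def by simp
      moreover have "mat_act (A n) (\<lambda>l. \<Sum>k\<in>T. mix_coeff (Suc n) k * C_component n m k l) ?i
          = (\<Sum>k\<in>T. mix_coeff (Suc n) k * (\<alpha> k / \<beta> k * (?lam * ?Z k)))"
        using IH i' by (simp add: mat_act_sum mat_act_scale T_def mult_ac)
      ultimately show ?thesis
        by (simp add: sum.distrib sum_distrib_left mult_ac)
    qed
    also have "\<dots> = (\<Sum>k\<in>T. \<alpha> (Suc n) * (mix_coeff (Suc n) k * (?lam * ?Z k)))"
    proof (intro sum.cong refl mix_coeff_balance)
      fix k assume "k \<in> T"
      then have k: "k \<in> {1..N}" "k \<noteq> Suc n" and "Suc n \<in> {1..N}" using n by (auto simp: T_def)
      then show "\<beta> k \<noteq> 0" "\<alpha> (Suc n) * \<beta> k - \<beta> (Suc n) * \<alpha> k \<noteq> 0"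
        using \<beta>_nonzero ratios_distinct[of k "Suc n"] by auto
    qed
    also have "\<dots> = \<alpha> (Suc n) * ?lam * (\<Sum>k\<in>T. mix_coeff (Suc n) k * ?Z k)"
      by (simp add: sum_distrib_left mult_ac)
    also have "\<dots> = A_eigval (Suc n) (Suc m) * \<alpha> (Suc n) / \<beta> (Suc n) * ?Y i"
      using False \<beta>N by (simp add: T_def)
    finally show ?thesis .
  qed
qed

lemma C_component_eigen:
  "n \<le> N \<Longrightarrow> m \<le> n \<Longrightarrow> j \<in> {n-m+1..n} \<Longrightarrow> i < 2^n \<Longrightarrow>
   mat_act (A n) (C_component n m j) i = A_eigval n m * \<alpha> j / \<beta> j * C_component n m j i"
proof (induction n arbitrary: m j i)
  case (Suc n)
  then obtain m' where m: "m = Suc m'" "m' \<le> n" by (cases m) auto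
  have IH: "\<And>j i. j \<in> {n-m'+1..n} \<Longrightarrow> i < 2^n \<Longrightarrow>
      mat_act (A n) (C_component n m' j) i = A_eigval n m' * \<alpha> j / \<beta> j * C_component n m' j i"
    using Suc.IH Suc.prems(1) m by auto
  show ?case
  proof (cases "j = Suc n")
    case True
    from Suc.prems show ?thesis
      unfolding True m(1) by (intro C_component_eigen_new[OF _ m(2) _ IH]) auto
  next
    case False
    then have "j \<in> {n-m'+1..n}" using Suc.prems m by auto
    from Suc.prems show ?thesis
      unfolding m(1) by (intro C_component_eigen_old[OF False _ IH[OF \<open>j \<in> {n-m'+1..n}\<close>]]) auto
  qed
qed simp

end

locale Cs_family = spectral_setting +
  fixes Cs :: "nat \<Rightarrow> complex mat"
  assumes Cs_carrier: "j \<in> {1..N} \<Longrightarrow> Cs j \<in> carrier_mat (2^N) (2^N)"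
    and Cs_sum: "msum (2^N) Cs N = Cmat t a b c d e f u N"
    and Cs_A: "j \<in> {1..N} \<Longrightarrow>
      Cs j * Amat t a b c d e f u N = ((e * u j + f) / (a * u j + b)) \<cdot>\<^sub>m (Amat t a b c d e f u N * Cs j)"
begin

lemma Cs_eigen:
  assumes j: "j \<in> {1..N}" and m: "m \<le> N" and l: "l < 2^N"
  shows "mat_act (A N) (mat_act (Cs j) (unit_fun (occ_index N m))) l
    = A_eigval N m * \<alpha> j / \<beta> j * mat_act (Cs j) (unit_fun (occ_index N m)) l"
proof -
  let ?v = "mat_act (Cs j) (unit_fun (occ_index N m))"
  have Cj: "Cs j \<in> carrier_mat (2^N) (2^N)" using Cs_carrier j .
  have "mat_act (Cs j * A N) (unit_fun (occ_index N m)) l = mat_act (Cs j) (mat_act (A N) (unit_fun (occ_index N m))) l"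
    using Cj l by (simp add: mat_act_mult)
  also have "\<dots> = mat_act (Cs j) (\<lambda>k. A_eigval N m * unit_fun (occ_index N m) k) l"
    using Cj A_unit_occ[OF m] by (intro mat_act_cong) auto
  finally have "A_eigval N m * ?v l = \<beta> j / \<alpha> j * mat_act (A N) ?v l"
    using Cs_A[OF j] Cj l by (simp add: mat_act_scale mat_act_smult_mat mat_act_mult)
  then show ?thesis using \<alpha>_nonzero[OF j] \<beta>_nonzero[OF j] by (simp add: field_simps)
qed

lemma Cs_eigval_inj: "m \<le> N \<Longrightarrow> inj_on (\<lambda>j. A_eigval N m * \<alpha> j / \<beta> j) {1..N}"
proof (rule inj_onI, rule ccontr)
  fix j k assume m: "m \<le> N" and jk: "j \<in> {1..N}" "k \<in> {1..N}" "j \<noteq> k"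
    and eq: "A_eigval N m * \<alpha> j / \<beta> j = A_eigval N m * \<alpha> k / \<beta> k"
  then have "A_eigval N m * (\<alpha> j * \<beta> k) = A_eigval N m * (\<alpha> k * \<beta> j)"
    using \<beta>_nonzero[OF jk(1)] \<beta>_nonzero[OF jk(2)] by (simp add: field_simps)
  then have "\<alpha> j * \<beta> k = \<alpha> k * \<beta> j"
    using A_eigval_nonzero[OF order.refl] by simp
  then show False
    using ratios_distinct[OF jk] by (simp add: algebra_simps)
qed

text \<open>Both \<open>\<Sum>\<^sub>j Cs j e\<close> and \<open>\<Sum>\<^sub>j C_component N m j\<close> decompose \<open>C N e\<close>, \<open>e = e\<^bsub>occ_index N m\<^esub>\<close>,
  into eigenvectors of \<open>A N\<close> for the pairwise distinct eigenvalues \<open>A_eigval N m \<alpha>\<^sub>j / \<beta>\<^sub>j\<close>;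
  hence the two decompositions agree term by term.\<close>
lemma Cs_on_occ:
  assumes m: "1 \<le> m" "m \<le> N" and i: "i < 2^N"
  shows "mat_act (Cs (N - m + 1)) (unit_fun (occ_index N m)) i = C_coeff N m * unit_fun (occ_index N (m - 1)) i"
proof -
  define T where "T = {N - m + 1..N}"
  let ?e = "unit_fun (occ_index N m)"
  define z where "z j l = mat_act (Cs j) ?e l - (if j \<in> T then C_component N m j l else 0)" for j l
  have eigen: "\<forall>j\<in>{1..N}. \<forall>l<2^N. mat_act (A N) (z j) l = A_eigval N m * \<alpha> j / \<beta> j * z j l"
  proof (intro ballI allI impI)
    fix j and l :: nat assume j: "j \<in> {1..N}" and l: "l < 2^N"
    have part: "mat_act (A N) (\<lambda>k. if j \<in> T then C_component N m j k else 0) l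
        = A_eigval N m * \<alpha> j / \<beta> j * (if j \<in> T then C_component N m j l else 0)"
      using C_component_eigen[OF order.refl m(2) _ l] by (auto simp: T_def mat_act_zero)
    show "mat_act (A N) (z j) l = A_eigval N m * \<alpha> j / \<beta> j * z j l"
      unfolding z_def mat_act_diff Cs_eigen[OF j m(2) l] part by (rule right_diff_distrib[symmetric])
  qed
  have "\<forall>l<2^N. (\<Sum>j=1..N. z j l) = 0"
  proof (intro allI impI)
    fix l :: nat assume l: "l < 2^N"
    have "(\<Sum>j=1..N. mat_act (Cs j) ?e l) = mat_act (C N) ?e l"
      using msum_act[of N Cs "2^N" N ?e] Cs_carrier Cs_sum l by simp
    moreover have "(\<Sum>j=1..N. if j \<in> T then C_component N m j l else 0) = (\<Sum>j\<in>T. C_component N m j l)"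
      by (rule sum.mono_neutral_cong_right) (auto simp: T_def)
    ultimately show "(\<Sum>j=1..N. z j l) = 0"
      using C_component_sum[OF m(2) l] unfolding z_def T_def by (simp add: sum_subtractf)
  qed
  then have "\<forall>j\<in>{1..N}. \<forall>l<2^N. z j l = 0"
    using eigenfun_sum_zero[OF _ Cs_eigval_inj[OF m(2)] A_dims(2) eigen] by simp
  then have "mat_act (Cs (N - m + 1)) ?e i = C_component N m (N - m + 1) i"
    using m i unfolding z_def T_def by auto
  then show ?thesis using C_component_leading[OF m i] by simp
qed

lemma mprodrev_on_occ:
  "k \<le> N \<Longrightarrow> i < 2^N \<Longrightarrow>
   mat_act (mprodrev (2^N) Cs k) (unit_fun (occ_index N N)) i
     = (\<Prod>l=1..k. C_coeff N (N - l + 1)) * unit_fun (occ_index N (N - k)) i"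
proof (induction k arbitrary: i)
  case 0
  then show ?case by (simp add: mat_act_one)
next
  case (Suc k)
  have Ck: "Cs (Suc k) \<in> carrier_mat (2^N) (2^N)" using Cs_carrier Suc.prems by simp
  have P: "mprodrev (2^N) Cs k \<in> carrier_mat (2^N) (2^N)"
    using mprodrev_carrier[of N Cs "2^N" k] Cs_carrier Suc.prems by simp
  have "mat_act (mprodrev (2^N) Cs (Suc k)) (unit_fun (occ_index N N)) i
      = mat_act (Cs (Suc k)) (mat_act (mprodrev (2^N) Cs k) (unit_fun (occ_index N N))) i"
    using Ck P Suc.prems by (simp add: mat_act_mult)
  also have "\<dots> = mat_act (Cs (Suc k)) (\<lambda>l. (\<Prod>l=1..k. C_coeff N (N - l + 1)) * unit_fun (occ_index N (N - k)) l) i"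
    using Suc.IH Suc.prems Ck by (intro mat_act_cong) auto
  also have "\<dots> = (\<Prod>l=1..k. C_coeff N (N - l + 1)) * mat_act (Cs (N - (N - k) + 1)) (unit_fun (occ_index N (N - k))) i"
    using Suc.prems by (simp add: mat_act_scale Suc_diff_le)
  also have "\<dots> = (\<Prod>l=1..k. C_coeff N (N - l + 1)) * (C_coeff N (N - k) * unit_fun (occ_index N (N - k - 1)) i)"
    using Cs_on_occ[of "N - k" i] Suc.prems by simp
  finally show ?case
    using Suc.prems by (simp add: Suc_diff_le Suc_diff_Suc[symmetric])
qed

lemma mprodrev_corner: "mprodrev (2^N) Cs N $$ (0, 2^N - 1) = (\<Prod>l=1..N. C_coeff N (N - l + 1))"
proof -
  have "mprodrev (2^N) Cs N $$ (0, 2^N - 1) = mat_act (mprodrev (2^N) Cs N) (unit_fun (occ_index N N)) 0"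
    using mprodrev_carrier[of N Cs "2^N" N] Cs_carrier by (simp add: mat_act_unit_fun occ_index_def)
  then show ?thesis using mprodrev_on_occ[of N 0] by (simp add: unit_fun_def)
qed

end

section \<open>Evaluation of the coefficients\<close>

lemma prod_upper_triangle_Suc:
  "(\<Prod>j=1..Suc n. \<Prod>k\<in>{j<..Suc n}. g j k) = (\<Prod>j=1..n. \<Prod>k\<in>{j<..n}. g j k) * (\<Prod>j=1..n. g j (Suc n))"
proof -
  have "(\<Prod>j=1..n. \<Prod>k\<in>{j<..Suc n}. g j k) = (\<Prod>j=1..n. (\<Prod>k\<in>{j<..n}. g j k) * g j (Suc n))"
    by (intro prod.cong) (auto simp: atLeastSucAtMost_greaterThanAtMost[symmetric])
  then show ?thesis by (simp add: prod.distrib)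
qed

lemma prod_staircase_Suc:
  "(\<Prod>j=1..Suc n. w j * x j ^ (Suc n - j) * y j ^ (j - 1))
    = (\<Prod>j=1..n. w j * x j ^ (n - j) * y j ^ (j - 1)) * (\<Prod>j=1..n. x j) * (w (Suc n) * y (Suc n) ^ n)"
proof -
  have "(\<Prod>j=1..n. w j * x j ^ (Suc n - j) * y j ^ (j - 1))
      = (\<Prod>j=1..n. (w j * x j ^ (n - j) * y j ^ (j - 1)) * x j)"
    by (intro prod.cong) (auto simp: Suc_diff_le mult_ac)
  then have "(\<Prod>j=1..Suc n. w j * x j ^ (Suc n - j) * y j ^ (j - 1))
      = (\<Prod>j=1..n. (w j * x j ^ (n - j) * y j ^ (j - 1)) * x j) * (w (Suc n) * y (Suc n) ^ n)"
    by (simp add: prod.cl_ivl_Suc)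
  then show ?thesis by (simp only: prod.distrib)
qed

lemma prod_prefactor:
  fixes x y w :: "nat \<Rightarrow> complex"
  assumes "N \<le> M" and "\<And>j. j \<in> {1..N} \<Longrightarrow> y j \<noteq> 0"
  shows "(\<Prod>j=1..N. (x j / y j) ^ j) * ((\<Prod>j=1..N. x j) ^ (M - N) * (\<Prod>j=1..N. w j * x j ^ (N - j) * y j ^ (j - 1)))
    = (\<Prod>j=1..N. w j * x j ^ M / y j)"
proof -
  have "(x j / y j) ^ j * x j ^ (M - N) * (w j * x j ^ (N - j) * y j ^ (j - 1)) = w j * x j ^ M / y j"
    if j: "j \<in> {1..N}" for j
  proof -
    have "x j ^ M = x j ^ j * x j ^ (M - N) * x j ^ (N - j)"
      using j assms(1) by (simp flip: power_add)
    moreover have "y j ^ j = y j ^ (j - 1) * y j"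
      using j by (simp flip: power_Suc2)
    ultimately show ?thesis using assms(2)[OF j] by (simp add: power_divide field_simps)
  qed
  then have "(\<Prod>j=1..N. (x j / y j) ^ j * x j ^ (M - N) * (w j * x j ^ (N - j) * y j ^ (j - 1)))
      = (\<Prod>j=1..N. w j * x j ^ M / y j)"
    by (rule prod.cong[OF refl])
  then show ?thesis by (simp add: prod.distrib prod_power_distrib mult.assoc)
qed

context transfer_matrices
begin

lemma cross_eq:
  assumes "c * d + a * f = 0" and "t * c * d + b * e = 0"
  shows "\<alpha> k * \<beta> j - \<beta> k * \<alpha> j = c * d * (t - 1) * (u k - u j)"
proof -
  have "\<alpha> k * \<beta> j - \<beta> k * \<alpha> j = (a * f - b * e) * (u k - u j)"
    by (simp add: algebra_simps)
  moreover have "a * f - b * e = c * d * (t - 1)"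
  proof -
    have "a * f - b * e - c * d * (t - 1) = (c * d + a * f) - (t * c * d + b * e)"
      by (simp add: algebra_simps)
    with assms show ?thesis by simp
  qed
  ultimately show ?thesis by simp
qed

context
  assumes rel1: "c * d + a * f = 0" and rel2: "t * c * d + b * e = 0"
    and c: "c \<noteq> 0" and d: "d \<noteq> 0" and t1: "t \<noteq> 1"
begin

lemma mix_coeff_closed:
  assumes "u j \<noteq> u k"
  shows "e * u k + t * f - mix_coeff k j = \<beta> k * ((t * u j - u k) / (u j - u k))"
proof -
  have nz: "c * d * (t - 1) \<noteq> 0" "u k - u j \<noteq> 0" using assms c d t1 by auto
  have num: "\<delta> * \<gamma> k * \<beta> j = (c * d * (t - 1)) * ((t - 1) * u k * \<beta> j)"
    by (simp add: algebra_simps)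
  have mix: "mix_coeff k j = (t - 1) * u k * \<beta> j / (u k - u j)"
    unfolding mix_coeff_def cross_eq[OF rel1 rel2] num by (rule mult_divide_mult_cancel_left[OF nz(1)])
  have "e * u k + t * f - mix_coeff k j = ((e * u k + t * f) * (u k - u j) - (t - 1) * u k * \<beta> j) / (u k - u j)"
    unfolding mix by (rule diff_divide_eq_iff[OF nz(2)])
  also have "(e * u k + t * f) * (u k - u j) - (t - 1) * u k * \<beta> j = - (\<beta> k * (t * u j - u k))"
    by (simp add: algebra_simps)
  also have "- (\<beta> k * (t * u j - u k)) / (u k - u j) = \<beta> k * ((t * u j - u k) / (u j - u k))"
    by (metis minus_diff_eq divide_minus_right minus_divide_left times_divide_eq_right)
  finally show ?thesis .
qed

lemma C_coeff_Suc_lower: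
  assumes "inj_on u {1..Suc n}" and l: "l \<in> {1..n}"
  shows "C_coeff (Suc n) (Suc n - l + 1)
    = \<beta> (Suc n) * ((t * u l - u (Suc n)) / (u l - u (Suc n))) * C_coeff n (n - l + 1)"
proof -
  have "u l \<noteq> u (Suc n)" using assms by (auto dest: inj_onD)
  moreover have "Suc n - l + 1 = Suc (Suc (n - l))" "Suc (Suc n) - (Suc n - l + 1) = l" using l by auto
  ultimately show ?thesis using mix_coeff_closed[of l "Suc n"] l by simp
qed

lemma C_coeff_prod:
  "inj_on u {1..n} \<Longrightarrow> (\<Prod>l=1..n. C_coeff n (n - l + 1))
    = (\<Prod>j=1..n. \<gamma> j * \<alpha> j ^ (n - j) * \<beta> j ^ (j - 1)) * (\<Prod>j=1..n. \<Prod>k\<in>{j<..n}. (t * u j - u k) / (u j - u k))"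
proof (induction n)
  case (Suc n)
  let ?\<rho> = "\<lambda>j k. (t * u j - u k) / (u j - u k)"
  have "inj_on u {1..n}" using Suc.prems by (rule inj_on_subset) auto
  have "(\<Prod>l=1..Suc n. C_coeff (Suc n) (Suc n - l + 1))
      = (\<Prod>l=1..n. C_coeff (Suc n) (Suc n - l + 1)) * C_coeff (Suc n) 1"
    by (simp add: prod.cl_ivl_Suc)
  also have "\<dots> = (\<Prod>l=1..n. \<beta> (Suc n) * ?\<rho> l (Suc n) * C_coeff n (n - l + 1)) * (\<gamma> (Suc n) * (\<Prod>j=1..n. \<alpha> j))"
    by (simp only: prod.cong[OF refl C_coeff_Suc_lower[OF Suc.prems]]) (simp add: A_eigval_0)
  also have "\<dots> = \<beta> (Suc n) ^ n * (\<Prod>l=1..n. ?\<rho> l (Suc n)) * (\<Prod>l=1..n. C_coeff n (n - l + 1))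
      * (\<gamma> (Suc n) * (\<Prod>j=1..n. \<alpha> j))"
    by (simp only: prod.distrib prod_constant card_atLeastAtMost diff_Suc_1)
  also have "\<dots> = (\<Prod>j=1..Suc n. \<gamma> j * \<alpha> j ^ (Suc n - j) * \<beta> j ^ (j - 1))
      * (\<Prod>j=1..Suc n. \<Prod>k\<in>{j<..Suc n}. ?\<rho> j k)"
    unfolding Suc.IH[OF \<open>inj_on u {1..n}\<close>] prod_staircase_Suc prod_upper_triangle_Suc by (simp add: mult_ac)
  finally show ?case .
qed simp

end

end

theorem mainTheorem4:
  fixes t a b c d e f :: complex and u :: "nat \<Rightarrow> complex" and N M :: nat
    and Cs :: "nat \<Rightarrow> complex mat"
  assumes nz: "a \<noteq> 0" "b \<noteq> 0" "c \<noteq> 0" "d \<noteq> 0" "e \<noteq> 0" "f \<noteq> 0" "t \<noteq> 0"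
    and t1: "t \<noteq> 1"
    and rel1: "c * d + a * f = 0" and rel2: "t * c * d + b * e = 0"
    and NM: "1 \<le> N" "N \<le> M"
    and distinct: "inj_on u {1..N}"
    and nzA: "\<forall>j\<in>{1..N}. a * u j + b \<noteq> 0"
    and nzE: "\<forall>j\<in>{1..N}. e * u j + f \<noteq> 0"
    and tu: "\<forall>j\<in>{1..N}. \<forall>k\<in>{1..N}. j \<noteq> k \<longrightarrow> t * u j \<noteq> u k"
    and Cs_dim: "\<forall>j\<in>{1..N}. Cs j \<in> carrier_mat (2 ^ N) (2 ^ N)"
    and Cs_sum: "msum (2 ^ N) Cs N = Cmat t a b c d e f u N"
    and Cs_A: "\<forall>j\<in>{1..N}. Cs j * Amat t a b c d e f u N
        = ((e * u j + f) / (a * u j + b)) \<cdot>\<^sub>m (Amat t a b c d e f u N * Cs j)"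
    and Cs_sq: "\<forall>j\<in>{1..N}. Cs j * Cs j = 0\<^sub>m (2 ^ N) (2 ^ N)"
    and Cs_comm: "\<forall>j\<in>{1..N}. \<forall>k\<in>{1..N}. k \<noteq> j \<longrightarrow> Cs j * Cs k
        = ((e * u j + f) * (a * u k + b) * (u j - t * u k)
            / ((a * u j + b) * (e * u k + f) * (t * u j - u k))) \<cdot>\<^sub>m (Cs k * Cs j)"
  shows "(\<Prod>j=1..N. ((a * u j + b) / (e * u j + f)) ^ j)
      * mtrace (Qmat N * (Amat t a b c d e f u N ^\<^sub>m (M - N)) * mprodrev (2 ^ N) Cs N)
    = (\<Prod>j=1..N. (1 - t) * c * u j * (a * u j + b) ^ M / (e * u j + f))
      * (\<Prod>j=1..N. \<Prod>k\<in>{j<..N}. (t * u j - u k) / (u j - u k))"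
proof -
  have "(a * u k + b) * (e * u j + f) - (e * u k + f) * (a * u j + b) \<noteq> 0"
    if "j \<in> {1..N}" "k \<in> {1..N}" "j \<noteq> k" for j k
    using transfer_matrices.cross_eq[OF rel1 rel2, where u = u and k = k and j = j] inj_onD[OF distinct _ that(2,1)] that(3) nz(3,4) t1
    by auto
  then interpret Cs_family t a b c d e f u N Cs
    using nzA nzE Cs_dim Cs_sum Cs_A by unfold_locales auto
  have "mprodrev (2^N) Cs N \<in> carrier_mat (2^N) (2^N)"
    using mprodrev_carrier[of N Cs "2^N" N] Cs_dim by simp
  then have "mtrace (Qmat N * (A N ^\<^sub>m (M - N)) * mprodrev (2 ^ N) Cs N)
      = A_eigval N 0 ^ (M - N) * mprodrev (2^N) Cs N $$ (0, 2^N - 1)"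
    by (rule mtrace_Qmat_A_pow)
  also have "\<dots> = (\<Prod>j=1..N. \<alpha> j) ^ (M - N) * ((\<Prod>j=1..N. \<gamma> j * \<alpha> j ^ (N - j) * \<beta> j ^ (j - 1))
        * (\<Prod>j=1..N. \<Prod>k\<in>{j<..N}. (t * u j - u k) / (u j - u k)))"
    unfolding mprodrev_corner A_eigval_0 C_coeff_prod[OF rel1 rel2 nz(3,4) t1 distinct] ..
  finally have "mtrace (Qmat N * (A N ^\<^sub>m (M - N)) * mprodrev (2 ^ N) Cs N)
      = (\<Prod>j=1..N. \<alpha> j) ^ (M - N) * ((\<Prod>j=1..N. \<gamma> j * \<alpha> j ^ (N - j) * \<beta> j ^ (j - 1))
        * (\<Prod>j=1..N. \<Prod>k\<in>{j<..N}. (t * u j - u k) / (u j - u k)))" .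
  with prod_prefactor[of N M "\<lambda>j. e * u j + f" "\<lambda>j. a * u j + b" "\<lambda>j. (1 - t) * c * u j"] NM nzE
  show ?thesis by (simp add: mult.assoc[symmetric])
qed

end
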